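(* Let $\mathscr{A}$ be a $C^*$-algebra with identity such that the set $\mathscr{A}'_m$ of all linear multiplicative functionals $\varphi\colon\mathscr{A}\to\mathbb{C}$ is total (i.e., if $\varphi(a)=0$ for all $\varphi\in\mathscr{A}'_m$ then $a=0$). Let $\mathscr{X}$ be a right $\mathscr{A}$-module which is also a normed space. Let $n\geq 2$ and let $E, F\colon \mathscr{X}^n\to\mathscr{A}$ be multi-$\mathscr{A}$-linear functions, and assume that $E$ is bounded and strong. Suppose that for all $x_1,\dots,x_n\in\mathscr{X}$, $E(x_1,\dots,x_n)=0$ implies $F(x_1,\dots,x_n)=0$. Then the following are equivalent: (i) there exists $z\in\mathscr{X}$ such that both $E(z,\dots,z)$ and $F(z,\dots,z)$ belong to $G_{\mathscr{A}}$; (ii) for all $z_1,\dots,z_n\in\mathscr{X}$, $E(z_1,\dots,z_n)\in G_{\mathscr{A}}$ implies $F(z_1,\dots,z_n)\in G_{\mathscr{A}}$.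
   Context: $G_{\mathscr{A}}$ denotes the set of invertible elements of $\mathscr{A}$. A right $\mathscr{A}$-module $\mathscr{X}$ is a complex vector space with a right $\mathscr{A}$-action satisfying $(\alpha x)a=x(\alpha a)=\alpha(xa)$. A function $F\colon\mathscr{X}^n\to\mathscr{A}$ is multi-$\mathscr{A}$-linear if for all $x_1,\dots,x_n,y_j\in\mathscr{X}$, $\alpha\in\mathbb{C}$, $a\in\mathscr{A}$ and $j=1,\dots,n$: (A) $F$ is additive in the $j$-th variable; (B) $F(x_1,\dots,\alpha x_j a,\dots,x_n)=\alpha F(x_1,\dots,x_n)a$ if $j$ is even; (C) $F(x_1,\dots,\alpha x_j a,\dots,x_n)=\overline{\alpha}a^*F(x_1,\dots,x_n)$ if $j$ is odd. $F$ is bounded if there is $M$ with $\|F(x_1,\dots,x_n)\|\le M\|x_1\|\cdots\|x_n\|$ for all $x_i$. $F$ is strong if there exists $w\in\mathscr{X}$ with $F(w,w,\dots,w)\in G_{\mathscr{A}}$. *)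

theory Defs
  imports Complex_Main
begin

class complex_normed_vector = real_normed_vector +
  fixes scaleC :: "complex \<Rightarrow> 'a \<Rightarrow> 'a"
  assumes scaleC_add_right: "scaleC c (x + y) = scaleC c x + scaleC c y"
    and scaleC_add_left: "scaleC (c + d) x = scaleC c x + scaleC d x"
    and scaleC_scaleC: "scaleC c (scaleC d x) = scaleC (c * d) x"
    and scaleC_one: "scaleC 1 x = x"
    and scaleR_scaleC: "scaleR r x = scaleC (complex_of_real r) x"
    and norm_scaleC: "norm (scaleC c x) = cmod c * norm x"

class cstar_algebra = complex_normed_vector + real_normed_algebra_1 + banach +
  fixes adj :: "'a \<Rightarrow> 'a"
  assumes mult_scaleC_left: "scaleC c x * y = scaleC c (x * y)"
    and mult_scaleC_right: "x * scaleC c y = scaleC c (x * y)"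
    and adj_adj: "adj (adj x) = x"
    and adj_add: "adj (x + y) = adj x + adj y"
    and adj_scaleC: "adj (scaleC c x) = scaleC (cnj c) (adj x)"
    and adj_mult: "adj (x * y) = adj y * adj x"
    and cstar_identity: "norm (adj x * x) = (norm x)\<^sup>2"

definition invertibles :: "'a::cstar_algebra set" where
  "invertibles = {a. \<exists>b. a * b = 1 \<and> b * a = 1}"

definition mult_functional :: "('a::cstar_algebra \<Rightarrow> complex) \<Rightarrow> bool" where
  "mult_functional \<phi> \<longleftrightarrow>
     (\<forall>a b. \<phi> (a + b) = \<phi> a + \<phi> b) \<and>
     (\<forall>c a. \<phi> (scaleC c a) = c * \<phi> a) \<and>
     (\<forall>a b. \<phi> (a * b) = \<phi> a * \<phi> b)"

definition right_module :: "('x::complex_normed_vector \<Rightarrow> 'a::cstar_algebra \<Rightarrow> 'x) \<Rightarrow> bool" where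
  "right_module act \<longleftrightarrow>
     (\<forall>x y a. act (x + y) a = act x a + act y a) \<and>
     (\<forall>x a b. act x (a + b) = act x a + act x b) \<and>
     (\<forall>x a b. act x (a * b) = act (act x a) b) \<and>
     (\<forall>\<alpha> x a. act (scaleC \<alpha> x) a = act x (scaleC \<alpha> a) \<and>
                act x (scaleC \<alpha> a) = scaleC \<alpha> (act x a))"

text \<open>Multi-A-linear functions X^n -> A, arguments as lists of length n.
  List index i corresponds to the variable number j = i + 1.\<close>
definition multi_A_linear ::
  "('x::complex_normed_vector \<Rightarrow> 'a::cstar_algebra \<Rightarrow> 'x) \<Rightarrow> nat \<Rightarrow> ('x list \<Rightarrow> 'a) \<Rightarrow> bool" where
  "multi_A_linear act n F \<longleftrightarrow>
     (\<forall>xs. length xs = n \<longrightarrow> (\<forall>i<n.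
        (\<forall>y. F (xs[i := xs ! i + y]) = F xs + F (xs[i := y])) \<and>
        (\<forall>\<alpha> a. F (xs[i := act (scaleC \<alpha> (xs ! i)) a]) =
           (if even (i + 1) then scaleC \<alpha> (F xs) * a
            else scaleC (cnj \<alpha>) (adj a * F xs)))))"

definition bounded_multi :: "nat \<Rightarrow> ('x::complex_normed_vector list \<Rightarrow> 'a::cstar_algebra) \<Rightarrow> bool" where
  "bounded_multi n F \<longleftrightarrow>
     (\<exists>M. \<forall>xs. length xs = n \<longrightarrow> norm (F xs) \<le> M * prod_list (map norm xs))"

definition strong_multi :: "nat \<Rightarrow> ('x::complex_normed_vector list \<Rightarrow> 'a::cstar_algebra) \<Rightarrow> bool" where
  "strong_multi n F \<longleftrightarrow> (\<exists>w. F (replicate n w) \<in> invertibles)"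

end

theory Submission
  imports Defs
begin

text \<open>Totality of the multiplicative functionals forces \<open>\<A>\<close> to be commutative. Then the
  kernel inclusion makes \<open>F\<close> a constant multiple \<open>c * E\<close> of \<open>E\<close>: in a single variable,
  if \<open>E(t)\<close> is invertible then \<open>y + t\<cdot>a\<close> with \<open>a = -E(t)\<^sup>-\<^sup>1 E(y)\<close> lies in the kernel of \<open>E\<close>,
  hence of \<open>F\<close>, which gives \<open>F(y) = F(t) E(t)\<^sup>-\<^sup>1 E(y)\<close>. Moving from a tuple on which \<open>E\<close> is
  invertible to an arbitrary tuple one coordinate at a time spreads the identity \<open>F = c * E\<close>
  everywhere; at a point \<open>z\<close> as in (i) the constant \<open>c = F(z,\<dots>,z) E(z,\<dots>,z)\<^sup>-\<^sup>1\<close> is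
  invertible.\<close>

lemma commute_if_mult_functionals_total:
  fixes x y :: "'a::cstar_algebra"
  assumes total: "\<forall>a::'a::cstar_algebra. (\<forall>\<phi>. mult_functional \<phi> \<longrightarrow> \<phi> a = 0) \<longrightarrow> a = 0"
  shows "x * y = y * x"
proof -
  have "\<phi> (x * y - y * x) = 0" if "mult_functional \<phi>" for \<phi>
  proof -
    have "\<phi> (x * y) = \<phi> (x * y - y * x) + \<phi> (y * x)"
      using that unfolding mult_functional_def by (metis diff_add_cancel)
    moreover have "\<phi> (x * y) = \<phi> (y * x)"
      using that unfolding mult_functional_def by (simp add: mult.commute)
    ultimately show ?thesis by simp
  qed
  then have "x * y - y * x = 0"
    using total by blast
  then show ?thesis by simp
qed

lemma invertibles_mult:
  assumes "a \<in> invertibles" and "b \<in> invertibles"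
  shows "a * b \<in> invertibles"
proof -
  obtain a' b' where "a * a' = 1" "a' * a = 1" "b * b' = 1" "b' * b = 1"
    using assms unfolding invertibles_def by blast
  then have "(a * b) * (b' * a') = 1" "(b' * a') * (a * b) = 1"
    by (metis mult.assoc mult_1_left)+
  then show ?thesis unfolding invertibles_def by blast
qed

lemma multi_A_linear_update_add:
  assumes "multi_A_linear act n F" and "length xs = n" and "i < n"
  shows "F (xs[i := y + z]) = F (xs[i := y]) + F (xs[i := z])"
  using assms unfolding multi_A_linear_def
  by (metis length_list_update list_update_overwrite nth_list_update_eq)

text \<open>On the odd variables (numbered from 1) the action enters through \<open>adj\<close>, an involution.\<close>
definition slot_scalar :: "nat \<Rightarrow> 'a::cstar_algebra \<Rightarrow> 'a" where
  "slot_scalar i b = (if even (i + 1) then b else adj b)"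

lemma multi_A_linear_update_act:
  assumes commute: "\<And>a b::'a::cstar_algebra. a * b = b * a"
    and "multi_A_linear act n (F :: 'x::complex_normed_vector list \<Rightarrow> 'a)"
    and "length xs = n" and "i < n"
  shows "F (xs[i := act y (slot_scalar i b)]) = F (xs[i := y]) * b"
proof -
  have "F ((xs[i := y])[i := act (scaleC 1 (xs[i := y] ! i)) a]) =
    (if even (i + 1) then scaleC 1 (F (xs[i := y])) * a
     else scaleC (cnj 1) (adj a * F (xs[i := y])))" for a
    using assms(2-4) unfolding multi_A_linear_def
    by (metis length_list_update)
  then show ?thesis
    using assms(3,4) by (simp add: scaleC_one slot_scalar_def adj_adj commute)
qed

lemma proportional_if_kernel_subset:
  fixes g h :: "'x::plus \<Rightarrow> 'a::cstar_algebra" and s :: "'a \<Rightarrow> 'x"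
  assumes g_add: "\<And>x y. g (x + y) = g x + g y" and h_add: "\<And>x y. h (x + y) = h x + h y"
    and g_s: "\<And>b. g (s b) = g t * b" and h_s: "\<And>b. h (s b) = h t * b"
    and kernel: "\<And>y. g y = 0 \<Longrightarrow> h y = 0"
    and invertible: "g t \<in> invertibles" and h_t: "h t = c * g t"
  shows "h y = c * g y"
proof -
  obtain u where u: "g t * u = 1"
    using invertible unfolding invertibles_def by blast
  define b where "b = - (u * g y)"
  have "g (y + s b) = 0"
    unfolding g_add g_s b_def by (simp add: mult.assoc[symmetric] u)
  then have "h y + c * (g t * u) * - g y = 0"
    using kernel[of "y + s b"] unfolding h_add h_s h_t b_def by (simp add: mult.assoc)
  then show ?thesis by (simp add: u)
qed

locale kernel_dominated_pair =
  fixes act :: "'x::complex_normed_vector \<Rightarrow> 'a::cstar_algebra \<Rightarrow> 'x"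
    and n :: nat and E F :: "'x list \<Rightarrow> 'a"
  assumes commute: "\<And>a b::'a. a * b = b * a"
    and E_lin: "multi_A_linear act n E" and F_lin: "multi_A_linear act n F"
    and kernel: "\<And>xs. length xs = n \<Longrightarrow> E xs = 0 \<Longrightarrow> F xs = 0"
begin

lemmas E_update_add = multi_A_linear_update_add[OF E_lin]
lemmas F_update_add = multi_A_linear_update_add[OF F_lin]
lemmas E_update_act = multi_A_linear_update_act[OF commute E_lin]
lemmas F_update_act = multi_A_linear_update_act[OF commute F_lin]

lemma proportional_along_slot:
  assumes "length ws = n" and "i < n"
    and "E (ws[i := t]) \<in> invertibles" and "F (ws[i := t]) = c * E (ws[i := t])"
  shows "F (ws[i := y]) = c * E (ws[i := y])"
proof (rule proportional_if_kernel_subset[where g = "\<lambda>y. E (ws[i := y])"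
      and h = "\<lambda>y. F (ws[i := y])" and s = "\<lambda>b. act t (slot_scalar i b)" and t = t])
  show "E (ws[i := y]) = 0 \<Longrightarrow> F (ws[i := y]) = 0" for y
    using assms(1) by (simp add: kernel)
qed (use assms in \<open>simp_all add: E_update_add F_update_add E_update_act F_update_act\<close>)

lemma proportional_if_agree_from:
  assumes "\<forall>j. k \<le> j \<and> j < n \<longrightarrow> xs ! j = V ! j"
    and "length xs = n" and "length V = n"
    and "E V \<in> invertibles" and "F V = c * E V"
  shows "F xs = c * E xs"
  using assms
proof (induction k arbitrary: xs V)
  case 0
  then have "xs = V" by (simp add: nth_equalityI)
  with 0 show ?case by simp
next
  case (Suc k)
  show ?case
  proof (cases "k < n")
    case False
    then have "\<forall>j. k \<le> j \<and> j < n \<longrightarrow> xs ! j = V ! j" by auto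
    with Suc show ?thesis by blast
  next
    case True
    obtain v where v: "E V * v = 1"
      using Suc.prems(4) unfolding invertibles_def by blast
    txt \<open>\<open>b\<close> is chosen so that \<open>E V' = 1\<close>. Then \<open>xs[k := xs ! k + s b]\<close> and \<open>xs[k := V ! k]\<close>
      agree from \<open>k\<close> on with the invertible anchors \<open>V'\<close> and \<open>V\<close>, and linearity in the \<open>k\<close>-th
      argument recovers \<open>xs\<close>.\<close>
    define s where "s b = act (V ! k) (slot_scalar k b)" for b
    define b where "b = v * (1 - E (V[k := xs ! k]))"
    define V' where "V' = V[k := xs ! k + s b]"
    have E_s: "E (ws[k := s b]) = E (ws[k := V ! k]) * b"
      and F_s: "F (ws[k := s b]) = F (ws[k := V ! k]) * b" if "length ws = n" for ws
      unfolding s_def using that True by (simp_all add: E_update_act F_update_act)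
    have "E V' = 1"
      unfolding V'_def using Suc.prems(3) True E_s[of V]
      by (simp add: E_update_add b_def mult.assoc[symmetric] v)
    then have V': "E V' \<in> invertibles" "F V' = c * E V'"
      unfolding invertibles_def V'_def
      using proportional_along_slot[of V k "V ! k" c] Suc.prems(3-5) True by auto
    have "F (xs[k := xs ! k + s b]) = c * E (xs[k := xs ! k + s b])"
      using Suc.IH[of "xs[k := xs ! k + s b]" V'] Suc.prems(1-3) V'
      by (simp add: V'_def nth_list_update)
    moreover have "F (xs[k := V ! k]) = c * E (xs[k := V ! k])"
      using Suc.IH[of "xs[k := V ! k]" V] Suc.prems by (simp add: nth_list_update)
    ultimately show ?thesis
      using Suc.prems(2) True E_s[of xs] F_s[of xs]
      by (simp add: E_update_add F_update_add algebra_simps)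
  qed
qed

lemma proportional_everywhere:
  assumes "length V = n" and "E V \<in> invertibles" and "F V = c * E V"
    and "length xs = n"
  shows "F xs = c * E xs"
proof (rule proportional_if_agree_from[of n])
  show "\<forall>j. n \<le> j \<and> j < n \<longrightarrow> xs ! j = V ! j" by auto
qed (use assms in simp_all)

end

theorem corollary3p8:
  fixes act :: "'x::complex_normed_vector \<Rightarrow> 'a::cstar_algebra \<Rightarrow> 'x"
    and E F :: "'x list \<Rightarrow> 'a" and n :: nat
  assumes total: "\<forall>a::'a. (\<forall>\<phi>. mult_functional \<phi> \<longrightarrow> \<phi> a = 0) \<longrightarrow> a = 0"
    and module: "right_module act"
    and n: "n \<ge> 2"
    and E_lin: "multi_A_linear act n E"
    and F_lin: "multi_A_linear act n F"
    and E_bdd: "bounded_multi n E"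
    and E_strong: "strong_multi n E"
    and EF: "\<forall>xs. length xs = n \<longrightarrow> E xs = 0 \<longrightarrow> F xs = 0"
  shows "(\<exists>z. E (replicate n z) \<in> invertibles \<and> F (replicate n z) \<in> invertibles) \<longleftrightarrow>
         (\<forall>zs. length zs = n \<longrightarrow> E zs \<in> invertibles \<longrightarrow> F zs \<in> invertibles)"
proof
  assume "\<forall>zs. length zs = n \<longrightarrow> E zs \<in> invertibles \<longrightarrow> F zs \<in> invertibles"
  then show "\<exists>z. E (replicate n z) \<in> invertibles \<and> F (replicate n z) \<in> invertibles"
    using E_strong unfolding strong_multi_def by auto
next
  assume "\<exists>z. E (replicate n z) \<in> invertibles \<and> F (replicate n z) \<in> invertibles"
  then obtain z where E_z: "E (replicate n z) \<in> invertibles"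
    and F_z: "F (replicate n z) \<in> invertibles" by blast
  interpret kernel_dominated_pair act n E F
  proof
    show "a * b = b * a" for a b :: 'a
      by (rule commute_if_mult_functionals_total[OF total])
    show "F xs = 0" if "length xs = n" and "E xs = 0" for xs
      using EF that by blast
  qed (fact E_lin F_lin)+
  obtain u where u: "E (replicate n z) * u = 1" "u * E (replicate n z) = 1"
    using E_z unfolding invertibles_def by blast
  define c where "c = F (replicate n z) * u"
  have "u \<in> invertibles"
    using u unfolding invertibles_def by blast
  then have c: "c \<in> invertibles"
    unfolding c_def using F_z by (rule invertibles_mult[rotated])
  have "F (replicate n z) = c * E (replicate n z)"
    unfolding c_def by (metis mult.assoc mult_1_right u(2))
  then have "F zs = c * E zs" if "length zs = n" for zs
    using proportional_everywhere[of "replicate n z" c zs] E_z that by simp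
  then show "\<forall>zs. length zs = n \<longrightarrow> E zs \<in> invertibles \<longrightarrow> F zs \<in> invertibles"
    using invertibles_mult[OF c] by simp
qed

end
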